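(* For any $\phi\in\mathcal{C}$, $$\delta(\phi)(\omega)=\int_0^1\int_{\mathbb{U}}\phi(u,t,\omega)\,\tilde\mu_\omega(du,dt).$$
   Context: Let $\mathbb{U}$ be a Lusin space and $\nu$ a $\sigma$-finite measure on $(\mathbb{U},\mathcal{B}(\mathbb{U}))$ with $\nu(\mathbb{U})=\infty$. $\Omega$ is the set of integer-valued measures $\omega$ on $\mathbb{U}\times[0,1]$ with $\omega(\{(u,t)\})\le1$ and $\omega(A\times[0,1])<\infty$ whenever $\nu(A)<\infty$; $\mu_\omega:=\omega$; $\mathcal{F}_t:=\sigma\{\mu_\omega(A\times(0,s]):s\le t,A\in\mathcal{B}(\mathbb{U})\}$; $\mathbb{P}$ makes $\mu$ a Poisson random measure with intensity $\pi(du,dt)=\nu(du)dt$; $\tilde\mu_\omega:=\mu_\omega-\pi$. For $(u,t)\in\mathbb{U}\times[0,1]$, $\varepsilon^-_{(u,t)}$ removes a mass: $(\varepsilon^-_{(u,t)}\omega)(A):=\omega(A\cap\{(u,t)\}^c)$. For $\phi\in L^1(\pi\times\mathbb{P})$ the divergence is $\delta(\phi)(\omega):=\int_0^1\int_{\mathbb{U}}\phi(u,t,\varepsilon^-_{(u,t)}\omega)\,\tilde\mu_\omega(du,dt)$. $\mathcal{C}$ is the linear span of processes $\phi(u,t,\omega)=1_{(t_0,t_1]}(t)g(u,\omega)$, where $0\le t_0<t_1\le1$, $g$ is bounded and $\mathcal{B}(\mathbb{U})\times\mathcal{F}_{t_0}$-measurable, and $g(u,\omega)1_{U^c}(u)=0$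 for some $U\in\mathcal{B}(\mathbb{U})$ with $\nu(U)<\infty$. *)

theory Defs
  imports "HOL-Analysis.Analysis"
begin

text \<open>Lusin space: Hausdorff (type class t2_space) and the image of a Polish space under a
continuous bijection; equivalently (Kechris 7.9) the image of a closed subset of the Baire
space nat => nat under a continuous bijection.\<close>
definition lusin :: "'u::topological_space set \<Rightarrow> bool" where
  "lusin S \<longleftrightarrow> (\<exists>(F::(nat \<Rightarrow> nat) set) (f::(nat \<Rightarrow> nat) \<Rightarrow> 'u).
      closed F \<and> continuous_on F f \<and> bij_betw f F S)"

definition UT :: "('u::topological_space \<times> real) measure" where
  "UT = (borel :: 'u measure) \<Otimes>\<^sub>M restrict_space borel {0..1::real}"

definition Omega :: "'u::topological_space measure \<Rightarrow> ('u \<times> real) measure set" where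
  "Omega nu = {\<omega>. sets \<omega> = sets (UT :: ('u \<times> real) measure)
      \<and> (\<forall>A\<in>sets (UT :: ('u \<times> real) measure). emeasure \<omega> A \<in> range of_nat \<union> {\<infinity>})
      \<and> (\<forall>x\<in>space (UT :: ('u \<times> real) measure). emeasure \<omega> {x} \<le> 1)
      \<and> (\<forall>A\<in>sets (borel :: 'u measure). emeasure nu A < \<infinity> \<longrightarrow> emeasure \<omega> (A \<times> {0..1}) < \<infinity>)}"

definition Filt :: "'u::topological_space measure \<Rightarrow> real \<Rightarrow> ('u \<times> real) measure measure" where
  "Filt nu t = sigma (Omega nu)
     {{\<omega> \<in> Omega nu. emeasure \<omega> (A \<times> {0<..s}) \<in> B} | A s B.
        A \<in> sets (borel :: 'u measure) \<and> s \<le> t \<and> B \<in> sets (borel :: ennreal measure)}"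

definition pi_int :: "'u::topological_space measure \<Rightarrow> ('u \<times> real) measure" where
  "pi_int nu = nu \<Otimes>\<^sub>M restrict_space lborel {0..1::real}"

definition eps_minus :: "'a \<Rightarrow> 'a measure \<Rightarrow> 'a measure" where
  "eps_minus x \<omega> = measure_of (space \<omega>) (sets \<omega>) (\<lambda>A. emeasure \<omega> (A - {x}))"

definition comp_integral :: "'u::topological_space measure \<Rightarrow> ('u \<times> real) measure
    \<Rightarrow> ('u \<times> real \<Rightarrow> real) \<Rightarrow> real" where
  "comp_integral nu \<omega> f = (\<integral>x. f x \<partial>\<omega>) - (\<integral>x. f x \<partial>(pi_int nu))"

definition delta :: "'u::topological_space measure
    \<Rightarrow> ('u \<Rightarrow> real \<Rightarrow> ('u \<times> real) measure \<Rightarrow> real) \<Rightarrow> ('u \<times> real) measure \<Rightarrow> real" where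
  "delta nu \<phi> \<omega> = comp_integral nu \<omega> (\<lambda>(u,t). \<phi> u t (eps_minus (u,t) \<omega>))"

definition elementary :: "'u::topological_space measure
    \<Rightarrow> ('u \<Rightarrow> real \<Rightarrow> ('u \<times> real) measure \<Rightarrow> real) \<Rightarrow> bool" where
  "elementary nu \<phi> \<longleftrightarrow> (\<exists>t0 t1 g U. 0 \<le> t0 \<and> t0 < t1 \<and> t1 \<le> 1
      \<and> (\<exists>B. \<forall>u. \<forall>\<omega>\<in>Omega nu. \<bar>g u \<omega>\<bar> \<le> B)
      \<and> (\<lambda>(u,\<omega>). g u \<omega>) \<in> borel_measurable ((borel :: 'u measure) \<Otimes>\<^sub>M Filt nu t0)
      \<and> U \<in> sets (borel :: 'u measure) \<and> emeasure nu U < \<infinity>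
      \<and> (\<forall>u. \<forall>\<omega>\<in>Omega nu. u \<notin> U \<longrightarrow> g u \<omega> = 0)
      \<and> \<phi> = (\<lambda>u t \<omega>. indicator {t0<..t1} t * g u \<omega>))"

inductive_set Cset :: "'u::topological_space measure
    \<Rightarrow> ('u \<Rightarrow> real \<Rightarrow> ('u \<times> real) measure \<Rightarrow> real) set" for nu where
  zero: "(\<lambda>u t \<omega>. 0) \<in> Cset nu"
| add: "elementary nu \<phi> \<Longrightarrow> \<psi> \<in> Cset nu \<Longrightarrow> (\<lambda>u t \<omega>. c * \<phi> u t \<omega> + \<psi> u t \<omega>) \<in> Cset nu"

end

theory Submission imports Defs begin

text \<open>The identity holds pathwise. An elementary process is \<open>1_(t0,t1](t) g(u,\<omega>)\<close> with
\<open>g(u,-)\<close> measurable for \<open>F_t0\<close>, which is generated by the counts \<open>\<omega>(A \<times> (0,s])\<close>,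
\<open>s \<le> t0\<close>. For \<open>t > t0\<close> removing the atom at \<open>(u,t)\<close> changes none of these counts, so
\<open>g(u,-)\<close> cannot distinguish the thinned configuration from \<open>\<omega>\<close>; for \<open>t \<le> t0\<close> the
indicator vanishes.\<close>

lemma eps_minus_eq_density:
  assumes S: "space M - {x} \<in> sets M"
  shows "eps_minus x M = density M (indicator (space M - {x}))"
proof -
  let ?D = "density M (indicator (space M - {x}) :: _ \<Rightarrow> ennreal)"
  have emeasure_D: "emeasure ?D A = emeasure M (A - {x})" if A: "A \<in> sets M" for A
  proof -
    have "emeasure ?D A = (\<integral>\<^sup>+ y. indicator (space M - {x}) y * indicator A y \<partial>M)"
      using S A by (intro emeasure_density) auto
    also have "\<dots> = (\<integral>\<^sup>+ y. indicator (A - {x}) y \<partial>M)"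
      using sets.sets_into_space[OF A] by (intro nn_integral_cong) (auto simp: indicator_def)
    also have "\<dots> = emeasure M (A - {x})"
      using S A by (intro nn_integral_indicator) (metis Diff_Int2 sets.Int sets.sets_into_space
          Int_absorb1 Diff_Int_distrib2 Int_Diff)
    finally show ?thesis .
  qed
  have "eps_minus x M = measure_of (space M) (sets M) (emeasure ?D)"
    unfolding eps_minus_def
    by (intro measure_of_eq sets.space_closed) (simp add: sets.sigma_sets_eq emeasure_D)
  also have "\<dots> = ?D"
    by (metis measure_of_of_measure sets_density space_density)
  finally show ?thesis .
qed

lemma emeasure_eps_minus:
  assumes "space M - {x} \<in> sets M" and "A \<in> sets M"
  shows "emeasure (eps_minus x M) A = emeasure M (A - {x})"
proof -
  have "A - {x} = (space M - {x}) \<inter> A"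
    using sets.sets_into_space[OF assms(2)] by auto
  then show ?thesis
    using assms by (simp add: eps_minus_eq_density emeasure_restricted)
qed

lemma sets_eps_minus [simp]: "sets (eps_minus x M) = sets M"
  unfolding eps_minus_def by simp

lemma emeasure_eps_minus_le:
  assumes "space M - {x} \<in> sets M"
  shows "emeasure (eps_minus x M) A \<le> emeasure M A"
proof (cases "A \<in> sets M")
  case True
  have "A - {x} \<in> sets M"
    using assms True by (metis Diff_Int2 Diff_Int_distrib2 Int_absorb1 sets.Int sets.sets_into_space)
  then show ?thesis
    using assms True by (simp add: emeasure_eps_minus emeasure_mono)
next
  case False
  then show ?thesis by (simp add: emeasure_notin_sets)
qed

lemma space_UT: "space (UT :: ('u::topological_space \<times> real) measure) = UNIV \<times> {0..1}"
  unfolding UT_def by (simp add: space_pair_measure)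

lemma sets_UT_singleton:
  assumes "x \<in> space (UT :: ('u::t2_space \<times> real) measure)"
  shows "{x} \<in> sets (UT :: ('u \<times> real) measure)"
proof -
  obtain u t where x: "x = (u,t)" and t: "t \<in> {0..1}"
    using assms by (cases x) (auto simp: space_UT)
  have "{t} \<in> sets (restrict_space borel {0..1::real})"
    using t by (subst sets_restrict_space_iff) auto
  then show ?thesis unfolding UT_def x by (intro sets_Pair) auto
qed

lemma space_Diff_singleton_in_sets:
  assumes "sets M = sets (UT :: ('u::t2_space \<times> real) measure)"
  shows "space M - {x} \<in> sets M"
proof -
  have "space (UT :: ('u \<times> real) measure) - {x} \<in> sets (UT :: ('u \<times> real) measure)"
    using sets_UT_singleton[of x] by (cases "x \<in> space (UT :: ('u \<times> real) measure)") auto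
  then show ?thesis
    using assms sets_eq_imp_space_eq[OF assms] by simp
qed

lemma eps_minus_in_Omega:
  fixes nu :: "'u::t2_space measure"
  assumes \<omega>: "\<omega> \<in> Omega nu"
  shows "eps_minus x \<omega> \<in> Omega nu"
proof -
  have sets_\<omega>: "sets \<omega> = sets (UT :: ('u \<times> real) measure)"
    using \<omega> by (simp add: Omega_def)
  note S = space_Diff_singleton_in_sets[OF sets_\<omega>, of x]
  show ?thesis unfolding Omega_def
  proof (intro CollectI conjI ballI impI)
    show "sets (eps_minus x \<omega>) = sets (UT :: ('u \<times> real) measure)"
      using sets_\<omega> by simp
  next
    fix A :: "('u \<times> real) set" assume A: "A \<in> sets (UT :: ('u \<times> real) measure)"
    have "A - {x} \<in> sets \<omega>"
      using A S sets_\<omega> by (metis Diff_Int2 Diff_Int_distrib2 Int_absorb1 sets.Int sets.sets_into_space)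
    then show "emeasure (eps_minus x \<omega>) A \<in> range of_nat \<union> {\<infinity>}"
      using \<omega> A S sets_\<omega> by (simp add: emeasure_eps_minus Omega_def)
  next
    fix y assume "y \<in> space (UT :: ('u \<times> real) measure)"
    then show "emeasure (eps_minus x \<omega>) {y} \<le> 1"
      using \<omega> emeasure_eps_minus_le[OF S, of "{y}"] unfolding Omega_def by (blast intro: order_trans)
  next
    fix A :: "'u set" assume "A \<in> sets borel" and "emeasure nu A < \<infinity>"
    then show "emeasure (eps_minus x \<omega>) (A \<times> {0..1}) < \<infinity>"
      using \<omega> emeasure_eps_minus_le[OF S, of "A \<times> {0..1}"] unfolding Omega_def
      by (blast intro: le_less_trans)
  qed
qed

lemma emeasure_eps_minus_eq_if_notin:
  assumes "sets M = sets (UT :: ('u::t2_space \<times> real) measure)" and "x \<notin> A"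
  shows "emeasure (eps_minus x M) A = emeasure M A"
proof (cases "A \<in> sets M")
  case True
  then show ?thesis
    using emeasure_eps_minus[OF space_Diff_singleton_in_sets[OF assms(1)] True] assms(2) by simp
next
  case False
  then show ?thesis by (simp add: emeasure_notin_sets)
qed

lemma mem_sigma_sets_iff_if_generators_agree:
  assumes "S \<in> sigma_sets \<Omega> G" "a \<in> \<Omega>" "b \<in> \<Omega>" "\<And>T. T \<in> G \<Longrightarrow> a \<in> T \<longleftrightarrow> b \<in> T"
  shows "a \<in> S \<longleftrightarrow> b \<in> S"
  using assms(1) by induction (use assms(2-4) in auto)

lemma measurable_sigma_eq_if_generators_agree:
  fixes f :: "'a \<Rightarrow> 'b::t1_space"
  assumes f: "f \<in> borel_measurable (sigma \<Omega> G)" and G: "G \<subseteq> Pow \<Omega>"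
    and a: "a \<in> \<Omega>" and b: "b \<in> \<Omega>" and agree: "\<And>T. T \<in> G \<Longrightarrow> a \<in> T \<longleftrightarrow> b \<in> T"
  shows "f a = f b"
proof -
  have "f -` {f a} \<inter> space (sigma \<Omega> G) \<in> sets (sigma \<Omega> G)"
    using f by (rule measurable_sets) simp
  then have "f -` {f a} \<inter> \<Omega> \<in> sigma_sets \<Omega> G"
    by (simp only: space_measure_of[OF G] sets_measure_of[OF G])
  then have "b \<in> f -` {f a} \<inter> \<Omega>"
    using mem_sigma_sets_iff_if_generators_agree[OF _ a b agree] a by blast
  then show ?thesis by simp
qed

lemma Filt_measurable_eps_minus_invariant:
  fixes nu :: "'u::t2_space measure"
  assumes f: "f \<in> borel_measurable (Filt nu s)" and \<omega>: "\<omega> \<in> Omega nu" and "s < t"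
  shows "f (eps_minus (u,t) \<omega>) = (f \<omega> :: real)"
proof -
  let ?G = "{{\<omega> \<in> Omega nu. emeasure \<omega> (A \<times> {0<..r}) \<in> B} | A r B.
      A \<in> sets (borel :: 'u measure) \<and> r \<le> s \<and> B \<in> sets (borel :: ennreal measure)}"
  have G: "?G \<subseteq> Pow (Omega nu)"
    by auto
  have sets_\<omega>: "sets \<omega> = sets (UT :: ('u \<times> real) measure)"
    using \<omega> by (simp add: Omega_def)
  have counts_agree:
    "emeasure (eps_minus (u,t) \<omega>) (A \<times> {0<..r}) = emeasure \<omega> (A \<times> {0<..r})" if "r \<le> s" for A r
    using \<open>s < t\<close> that by (intro emeasure_eps_minus_eq_if_notin[OF sets_\<omega>]) auto
  have "eps_minus (u,t) \<omega> \<in> T \<longleftrightarrow> \<omega> \<in> T" if "T \<in> ?G" for T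
  proof -
    obtain A r B where T: "T = {\<omega> \<in> Omega nu. emeasure \<omega> (A \<times> {0<..r}) \<in> B}" and "r \<le> s"
      using \<open>T \<in> ?G\<close> by blast
    then show ?thesis
      using \<omega> eps_minus_in_Omega[OF \<omega>] counts_agree[of r A] by simp
  qed
  then show ?thesis
    using measurable_sigma_eq_if_generators_agree[OF f[unfolded Filt_def] G eps_minus_in_Omega[OF \<omega>] \<omega>]
    by blast
qed

lemma elementary_eps_minus_invariant:
  fixes nu :: "'u::t2_space measure"
  assumes "elementary nu \<phi>" and \<omega>: "\<omega> \<in> Omega nu"
  shows "\<phi> u t (eps_minus (u,t) \<omega>) = \<phi> u t \<omega>"
proof -
  obtain t0 t1 g where
    g: "(\<lambda>(u,\<omega>). g u \<omega>) \<in> borel_measurable ((borel :: 'u measure) \<Otimes>\<^sub>M Filt nu t0)"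
    and \<phi>: "\<phi> = (\<lambda>u t \<omega>. indicator {t0<..t1} t * g u \<omega>)"
    using assms(1) unfolding elementary_def by blast
  have "g u (eps_minus (u,t) \<omega>) = g u \<omega>" if "t0 < t"
    using measurable_Pair2[OF g, of u] \<omega> that
    by (intro Filt_measurable_eps_minus_invariant) auto
  then show ?thesis by (simp add: \<phi> indicator_def)
qed

lemma Cset_eps_minus_invariant:
  fixes nu :: "'u::t2_space measure"
  assumes "\<phi> \<in> Cset nu" and "\<omega> \<in> Omega nu"
  shows "\<phi> u t (eps_minus (u,t) \<omega>) = \<phi> u t \<omega>"
  using assms(1)
proof induction
  case zero
  then show ?case by simp
next
  case (add \<phi> \<psi> c)
  then show ?case using elementary_eps_minus_invariant[OF add(1) assms(2)] by simp
qed

theorem lemma3p1: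
  fixes nu :: "'u::t2_space measure"
    and \<phi> :: "'u \<Rightarrow> real \<Rightarrow> ('u \<times> real) measure \<Rightarrow> real"
    and \<omega> :: "('u \<times> real) measure"
  assumes "lusin (UNIV :: 'u set)"
    and "sets nu = sets (borel :: 'u measure)"
    and "sigma_finite_measure nu"
    and "emeasure nu (space nu) = \<infinity>"
    and "\<phi> \<in> Cset nu"
    and "\<omega> \<in> Omega nu"
  shows "delta nu \<phi> \<omega> = comp_integral nu \<omega> (\<lambda>(u,t). \<phi> u t \<omega>)"
  unfolding delta_def using Cset_eps_minus_invariant[OF assms(5,6)] by simp

end
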